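(* Let $\mathcal{K}=\mathbb{F}_q((t))$, $\mathcal{O}=\mathbb{F}_q[[t]]$ and $G=PGL(2,\mathcal{K})$. Let $B(\mathcal{K})\subset G$ be the subgroup of (classes of) upper triangular matrices, let $$I^0=\left\{\begin{pmatrix}1+ta & b\\ tc & 1+td\end{pmatrix} : a,b,c,d\in\mathcal{O}\right\}\subset G,$$ and let $A\subset G$ be the subgroup generated by $I^0$ and $\sigma=\begin{pmatrix}0&1\\ t&0\end{pmatrix}$. Then $PGL(2,\mathcal{K})=B(\mathcal{K})\cdot A$. *)

theory Defs
  imports "HOL-Analysis.Analysis" "HOL-Computational_Algebra.Formal_Laurent_Series"
begin

text \<open>Matrices over K = F_q((t)) are 2x2 matrices of formal Laurent series ('a fls ^2^2),
  with 'a a finite field F_q. t is fls_X. PGL(2,K) = GL(2,K) / scalars; statements about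
  PGL are stated via representatives in GL(2,K).\<close>

type_synonym 'a mat2 = "'a fls ^ 2 ^ 2"

definition mk2 :: "'a fls \<Rightarrow> 'a fls \<Rightarrow> 'a fls \<Rightarrow> 'a fls \<Rightarrow> 'a::field mat2" where
  "mk2 a b c d = vector [vector [a, b], vector [c, d]]"

definition val_ring :: "'a::field fls set" where
  "val_ring = {f. 0 \<le> fls_subdegree f}"

definition upper_tri :: "'a::field mat2 set" where
  "upper_tri = {M. invertible M \<and> M $ 2 $ 1 = 0}"

definition I0 :: "'a::field mat2 set" where
  "I0 = {mk2 (1 + fls_X * a) b (fls_X * c) (1 + fls_X * d) | a b c d.
           a \<in> val_ring \<and> b \<in> val_ring \<and> c \<in> val_ring \<and> d \<in> val_ring}"

definition sigma :: "'a::field mat2" where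
  "sigma = mk2 0 1 fls_X 0"

inductive_set gen_subgroup :: "'a::field mat2 set \<Rightarrow> 'a mat2 set" for S where
  gen_one: "mat 1 \<in> gen_subgroup S"
| gen_base: "s \<in> S \<Longrightarrow> s \<in> gen_subgroup S"
| gen_mult: "x \<in> gen_subgroup S \<Longrightarrow> y \<in> gen_subgroup S \<Longrightarrow> x ** y \<in> gen_subgroup S"
| gen_inv: "x \<in> gen_subgroup S \<Longrightarrow> x ** y = mat 1 \<Longrightarrow> y ** x = mat 1 \<Longrightarrow> y \<in> gen_subgroup S"

end

theory Submission
  imports Defs
begin

text \<open>It suffices to find \<open>a \<in> A\<close> such that the bottom row \<open>(r, s)\<close> of \<open>g\<close> is
  moved by \<open>a\<^sup>-\<^sup>1\<close> to a row \<open>(0, *)\<close>, since then \<open>g a\<^sup>-\<^sup>1\<close> is upper triangular.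
  If \<open>s\<close> has strictly smaller valuation than \<open>r\<close>, then \<open>r/s \<in> t\<O>\<close> and the lower
  unipotent matrix with entry \<open>r/s\<close> lies in \<open>I\<^sup>0\<close>. Otherwise \<open>s/r \<in> \<O>\<close>, and the
  lower unipotent matrix with entry \<open>t s/r\<close>, followed by \<open>\<sigma>\<close>, does the job.\<close>

lemma mk2_nth [simp]:
  "mk2 a b c d $ 1 $ 1 = a" "mk2 a b c d $ 1 $ 2 = b"
  "mk2 a b c d $ 2 $ 1 = c" "mk2 a b c d $ 2 $ 2 = d"
  by (simp_all add: mk2_def)

lemma mk2_eta: "(M::'a::field mat2) = mk2 (M$1$1) (M$1$2) (M$2$1) (M$2$2)"
  by (simp add: vec_eq_iff forall_2)

lemma mk2_mult:
  "(mk2 a b c d :: 'a::field mat2) ** mk2 e f g h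
     = mk2 (a*e+b*g) (a*f+b*h) (c*e+d*g) (c*f+d*h)"
  by (simp add: matrix_matrix_mult_def vec_eq_iff forall_2 sum_2)

lemma mat1_eq_mk2: "(mat 1 :: 'a::field mat2) = mk2 1 0 0 1"
  by (simp add: vec_eq_iff forall_2 mat_def)

lemma det_mk2: "det (mk2 a b c d :: 'a::field mat2) = a*d - b*c"
  by (simp add: det_2)

lemma divide_in_val_ring:
  fixes x y :: "'a::field fls"
  assumes "y \<noteq> 0" and "x = 0 \<or> fls_subdegree y \<le> fls_subdegree x"
  shows "x / y \<in> val_ring"
  using assms by (cases "x = 0") (auto simp: val_ring_def fls_divide_subdegree)

lemma lower_unipotent_in_I0:
  assumes "c \<in> val_ring"
  shows "mk2 1 0 (fls_X * c) 1 \<in> (I0 :: 'a::field mat2 set)"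
proof -
  have "mk2 (1 + fls_X * 0) 0 (fls_X * c) (1 + fls_X * 0) \<in> (I0 :: 'a mat2 set)"
    unfolding I0_def using assms by (fastforce simp: val_ring_def)
  then show ?thesis by simp
qed

lemma lower_unipotent_sigma_in_gen_subgroup:
  assumes "c \<in> val_ring"
  shows "mk2 0 1 fls_X (fls_X * c) \<in> gen_subgroup (I0 \<union> {sigma :: 'a::field mat2})"
proof -
  have "mk2 1 0 (fls_X * c) 1 ** sigma \<in> gen_subgroup (I0 \<union> {sigma :: 'a mat2})"
    using lower_unipotent_in_I0[OF assms] by (auto intro: gen_base gen_mult)
  then show ?thesis by (simp add: sigma_def mk2_mult)
qed

lemma upper_tri_times_gen_subgroup_if_lower_left_cleared:
  fixes g h a :: "'a::field mat2"
  assumes "invertible g" "h ** a = mat 1" "(g ** h) $ 2 $ 1 = 0" "a \<in> gen_subgroup S"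
  shows "\<exists>(c::'a fls) b a. c \<noteq> 0 \<and> b \<in> upper_tri \<and> a \<in> gen_subgroup S
           \<and> g = mat c ** b ** a"
proof (intro exI conjI)
  have "invertible h"
    using assms(2) matrix_left_right_inverse invertible_def by blast
  then show "g ** h \<in> upper_tri"
    unfolding upper_tri_def using assms invertible_mult by blast
  show "g = mat 1 ** (g ** h) ** a"
    by (metis matrix_mul_assoc matrix_mul_rid matrix_mul_lid assms(2))
qed (use assms in auto)

lemma lower_left_cleared_by_I0:
  fixes r s :: "'a::field fls"
  assumes "s \<noteq> 0" and "r = 0 \<or> fls_subdegree s < fls_subdegree r"
  shows "\<exists>h a. a \<in> gen_subgroup (I0 \<union> {sigma}) \<and> h ** a = mat 1
           \<and> (mk2 p q r s ** h) $ 2 $ 1 = 0"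
proof (intro exI conjI)
  have "r / (s * fls_X) \<in> val_ring"
    using assms by (intro divide_in_val_ring) auto
  then have "mk2 1 0 (fls_X * (r / (s * fls_X))) 1 \<in> (I0 :: 'a mat2 set)"
    by (rule lower_unipotent_in_I0)
  then show "mk2 1 0 (r / s) 1 \<in> gen_subgroup (I0 \<union> {sigma})"
    by (auto intro: gen_base)
  show "mk2 1 0 (- (r / s)) 1 ** mk2 1 0 (r / s) 1 = mat 1"
    by (simp add: mk2_mult mat1_eq_mk2)
  show "(mk2 p q r s ** mk2 1 0 (- (r / s)) 1) $ 2 $ 1 = 0"
    using assms(1) by (simp add: mk2_mult)
qed

lemma lower_left_cleared_by_sigma:
  fixes r s :: "'a::field fls"
  assumes "r \<noteq> 0" and "s = 0 \<or> fls_subdegree r \<le> fls_subdegree s"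
  shows "\<exists>h a. a \<in> gen_subgroup (I0 \<union> {sigma}) \<and> h ** a = mat 1
           \<and> (mk2 p q r s ** h) $ 2 $ 1 = 0"
proof (intro exI conjI)
  define u where "u = s / r"
  have "u \<in> val_ring"
    unfolding u_def using assms by (rule divide_in_val_ring)
  then show "mk2 0 1 fls_X (fls_X * u) \<in> gen_subgroup (I0 \<union> {sigma})"
    by (rule lower_unipotent_sigma_in_gen_subgroup)
  have X_inv: "inverse fls_X * (fls_X :: 'a fls) = 1"
    by simp
  show "mk2 (- u) (inverse fls_X) 1 0 ** mk2 0 1 fls_X (fls_X * u) = mat 1"
    by (simp add: mk2_mult mat1_eq_mk2 X_inv flip: mult.assoc)
  show "(mk2 p q r s ** mk2 (- u) (inverse fls_X) 1 0) $ 2 $ 1 = 0"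
    using assms(1) by (simp add: mk2_mult u_def)
qed

theorem mainTheorem2:
  fixes g :: "'a::{finite,field} mat2"
  assumes "invertible g"
  shows "\<exists>(c::'a fls) b a. c \<noteq> 0 \<and> b \<in> upper_tri \<and> a \<in> gen_subgroup (I0 \<union> {sigma})
           \<and> g = mat c ** b ** a"
proof -
  obtain p q r s where g: "g = mk2 p q r s"
    using mk2_eta by blast
  have "r \<noteq> 0 \<or> s \<noteq> 0"
    using assms unfolding invertible_det_nz g det_mk2 by auto
  then obtain h a where "a \<in> gen_subgroup (I0 \<union> {sigma})" "h ** a = mat 1"
    "(g ** h) $ 2 $ 1 = 0"
    unfolding g using lower_left_cleared_by_I0 lower_left_cleared_by_sigma
    by (metis linorder_not_le)
  then show ?thesis
    using upper_tri_times_gen_subgroup_if_lower_left_cleared[OF assms] by blast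
qed

end
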